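(* Proportional approval voting (PAV) is the only Thiele rule (for the fixed $m$ and $k$) that satisfies party-proportionality.
   Context: Let $\mathcal C=\{c_1,\dots,c_m\}$ ($m\ge2$) be the candidates, $\mathcal A$ the set of non-empty subsets of $\mathcal C$ (ballots), and a profile a map $A:N_A\to\mathcal A$ from a non-empty finite set of voters $N_A\subseteq\mathbb N$. Fix $k\in\{1,\dots,m-1\}$, and let $\mathcal W_k$ be the set of $k$-element subsets of $\mathcal C$ (committees). An ABC voting rule maps each profile to a non-empty subset of $\mathcal W_k$. A Thiele rule is an ABC voting rule for which there is a non-decreasing $s:\{0,\dots,k\}\to\mathbb R$ with $s(0)=0$ such that $f(A)$ is the set of committees $W$ maximizing $\sum_{i\in N_A}s(|A_i\cap W|)$. PAV is the Thiele rule with $s(x)=\sum_{z=1}^x\frac1z$. A profile $A$ is a party-list profile if there is a partition $\mathcal P_A=\{P_1,\dots,P_\ell\}$ of $\mathcal C$ such that every voter's ballot equals some $P_j$; $n_j$ denotes the number of voters whose ballot is $P_j$. An ABC voting rule $f$ is party-proportional if for all party-list profiles $A$, all $W\in f(A)$, and all parties $P_i,P_j\in\mathcal P_A$ with $n_i/|P_i|<n_j/|P_j|$, $P_i\subseteq W$ implies $P_j\subseteq W$. *)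

theory Defs
  imports Complex_Main "HOL-Library.Disjoint_Sets"
begin

type_synonym 'c profile = "nat \<rightharpoonup> 'c set"

definition ballots :: "'c set \<Rightarrow> 'c set set" where
  "ballots C = {B. B \<subseteq> C \<and> B \<noteq> {}}"

definition is_profile :: "'c set \<Rightarrow> 'c profile \<Rightarrow> bool" where
  "is_profile C A \<longleftrightarrow> finite (dom A) \<and> dom A \<noteq> {} \<and> ran A \<subseteq> ballots C"

definition committees :: "'c set \<Rightarrow> nat \<Rightarrow> 'c set set" where
  "committees C k = {W. W \<subseteq> C \<and> card W = k}"

definition abc_rule :: "'c set \<Rightarrow> nat \<Rightarrow> ('c profile \<Rightarrow> 'c set set) \<Rightarrow> bool" where
  "abc_rule C k f \<longleftrightarrow>
     (\<forall>A. is_profile C A \<longrightarrow> f A \<noteq> {} \<and> f A \<subseteq> committees C k)"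

definition thiele_score :: "(nat \<Rightarrow> real) \<Rightarrow> 'c profile \<Rightarrow> 'c set \<Rightarrow> real" where
  "thiele_score s A W = (\<Sum>i\<in>dom A. s (card (the (A i) \<inter> W)))"

definition thiele_winners :: "'c set \<Rightarrow> nat \<Rightarrow> (nat \<Rightarrow> real) \<Rightarrow> 'c profile \<Rightarrow> 'c set set" where
  "thiele_winners C k s A =
     {W \<in> committees C k. \<forall>W'\<in>committees C k. thiele_score s A W' \<le> thiele_score s A W}"

definition thiele_rule :: "'c set \<Rightarrow> nat \<Rightarrow> ('c profile \<Rightarrow> 'c set set) \<Rightarrow> bool" where
  "thiele_rule C k f \<longleftrightarrow> abc_rule C k f \<and>
     (\<exists>s :: nat \<Rightarrow> real. s 0 = 0 \<and> mono_on {0..k} s \<and>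
        (\<forall>A. is_profile C A \<longrightarrow> f A = thiele_winners C k s A))"

definition pav_score :: "nat \<Rightarrow> real" where
  "pav_score x = (\<Sum>z=1..x. 1 / real z)"

definition pav :: "'c set \<Rightarrow> nat \<Rightarrow> 'c profile \<Rightarrow> 'c set set" where
  "pav C k A = thiele_winners C k pav_score A"

definition party_partition :: "'c set \<Rightarrow> 'c profile \<Rightarrow> 'c set set \<Rightarrow> bool" where
  "party_partition C A P \<longleftrightarrow> partition_on C P \<and> ran A \<subseteq> P"

definition party_list_profile :: "'c set \<Rightarrow> 'c profile \<Rightarrow> bool" where
  "party_list_profile C A \<longleftrightarrow> is_profile C A \<and> (\<exists>P. party_partition C A P)"

definition supporters :: "'c profile \<Rightarrow> 'c set \<Rightarrow> nat" where
  "supporters A B = card {i \<in> dom A. A i = Some B}"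

definition party_proportional :: "'c set \<Rightarrow> ('c profile \<Rightarrow> 'c set set) \<Rightarrow> bool" where
  "party_proportional C f \<longleftrightarrow>
     (\<forall>A P. is_profile C A \<longrightarrow> party_partition C A P \<longrightarrow>
        (\<forall>W\<in>f A. \<forall>Pi\<in>P. \<forall>Pj\<in>P.
           real (supporters A Pi) / real (card Pi) < real (supporters A Pj) / real (card Pj) \<longrightarrow>
           Pi \<subseteq> W \<longrightarrow> Pj \<subseteq> W))"

end

theory Submission
  imports Defs
begin

(* PAV is party-proportional: if a party Q lies inside a committee W and a candidate b of a
   party R does not, replacing a member of Q by b changes the PAV score by
   n_R / (|R \<inter> W| + 1) - n_Q / |Q|, which is positive when n_Q / |Q| < n_R / |R|.

   Conversely, let s be the score function of a party-proportional Thiele rule. Take k + 1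
   candidates S: n1 voters approve a party P of x + 1 of them, n2 voters a single further
   candidate c, and the rest of S is a party so heavily supported that it is always elected.
   Every winning committee is S minus one candidate of P \<union> {c}, and proportionality decides
   which by comparing n1 / (x + 1) with n2. This yields n1 s(x) + n2 s(1) < n1 s(x + 1) when
   n1 > n2 (x + 1) and the reverse inequality when n1 < n2 (x + 1); letting n1 / n2 approach
   x + 1 from both sides forces s(x + 1) - s(x) = s(1) / (x + 1) with s(1) > 0, so s is a
   positive multiple of the PAV score on {0..k}. *)

lemma thiele_score_eq_sum_supporters:
  assumes "finite (dom A)" "ran A \<subseteq> T" "finite T"
  shows "thiele_score s A W = (\<Sum>B\<in>T. real (supporters A B) * s (card (B \<inter> W)))"
proof -
  have img: "(\<lambda>i. the (A i)) ` dom A \<subseteq> T"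
    using assms(2) by (auto simp: ran_def)
  have "thiele_score s A W =
      (\<Sum>B\<in>T. \<Sum>i\<in>{i \<in> dom A. the (A i) = B}. s (card (the (A i) \<inter> W)))"
    unfolding thiele_score_def
    using sum.group[OF assms(1,3) img, of "\<lambda>i. s (card (the (A i) \<inter> W))"] by simp
  also have "\<dots> = (\<Sum>B\<in>T. real (supporters A B) * s (card (B \<inter> W)))"
  proof (rule sum.cong[OF refl])
    fix B
    have "{i \<in> dom A. the (A i) = B} = {i \<in> dom A. A i = Some B}" by auto
    then show "(\<Sum>i\<in>{i \<in> dom A. the (A i) = B}. s (card (the (A i) \<inter> W))) =
        real (supporters A B) * s (card (B \<inter> W))"
      unfolding supporters_def by simp
  qed
  finally show ?thesis .
qed

lemma thiele_score_diff_eq_sum_changed: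
  assumes "finite (dom A)" "ran A \<subseteq> T" "finite T" "Q \<subseteq> T"
    and "\<And>B. B \<in> T - Q \<Longrightarrow> B \<inter> W' = B \<inter> W"
  shows "thiele_score s A W' - thiele_score s A W =
    (\<Sum>B\<in>Q. real (supporters A B) * (s (card (B \<inter> W')) - s (card (B \<inter> W))))"
proof -
  have "thiele_score s A W' - thiele_score s A W =
      (\<Sum>B\<in>T. real (supporters A B) * (s (card (B \<inter> W')) - s (card (B \<inter> W))))"
    unfolding thiele_score_eq_sum_supporters[OF assms(1-3)]
    by (simp add: sum_subtractf right_diff_distrib)
  also have "\<dots> = (\<Sum>B\<in>Q. real (supporters A B) * (s (card (B \<inter> W')) - s (card (B \<inter> W))))"
    using assms(3-5) by (intro sum.mono_neutral_right) auto
  finally show ?thesis .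
qed

lemma thiele_winners_nonempty:
  assumes "finite C" "k \<le> card C"
  shows "thiele_winners C k s A \<noteq> {}"
proof -
  have fin: "finite (committees C k)"
    using assms(1) by (auto simp: committees_def intro: finite_subset[of _ "Pow C"])
  have "committees C k \<noteq> {}"
    using obtain_subset_with_card_n[OF assms(2)] by (auto simp: committees_def)
  then obtain W where W: "W \<in> committees C k"
    and max: "thiele_score s A W = Max (thiele_score s A ` committees C k)"
    using Max_in[of "thiele_score s A ` committees C k"] fin by fastforce
  have "thiele_score s A W' \<le> thiele_score s A W" if "W' \<in> committees C k" for W'
    unfolding max using fin that by simp
  with W show ?thesis unfolding thiele_winners_def by blast
qed

lemma thiele_winners_strict:
  assumes "W \<in> thiele_winners C k s A" "W' \<in> committees C k" "W' \<notin> thiele_winners C k s A"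
  shows "thiele_score s A W' < thiele_score s A W"
  using assms unfolding thiele_winners_def by force

lemma thiele_winners_scaled:
  assumes "finite C" "0 < a" "\<And>x. x \<le> k \<Longrightarrow> s x = a * t x"
  shows "thiele_winners C k s A = thiele_winners C k t A"
proof -
  have "thiele_score s A W = a * thiele_score t A W" if "W \<in> committees C k" for W
  proof -
    have "finite W" "card W = k"
      using that assms(1) finite_subset by (auto simp: committees_def)
    then have "card (B \<inter> W) \<le> k" for B
      by (metis Int_lower2 card_mono)
    then show ?thesis
      unfolding thiele_score_def sum_distrib_left using assms(3) by simp
  qed
  then show ?thesis
    unfolding thiele_winners_def using assms(2) by (auto simp: committees_def)
qed

lemma party_proportional_cong:
  assumes "\<And>A. is_profile C A \<Longrightarrow> f A = g A"
  shows "party_proportional C f \<longleftrightarrow> party_proportional C g"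
  using assms unfolding party_proportional_def by simp

lemma party_proportionalD:
  assumes "party_proportional C f" "is_profile C A" "party_partition C A P" "W \<in> f A"
    and "Q \<in> P" "R \<in> P"
    and "real (supporters A Q) / real (card Q) < real (supporters A R) / real (card R)"
    and "Q \<subseteq> W"
  shows "R \<subseteq> W"
  using assms unfolding party_proportional_def by blast

lemma pav_score_Suc: "pav_score (Suc n) = pav_score n + 1 / real (Suc n)"
  unfolding pav_score_def by (simp add: sum.cl_ivl_Suc)

lemma pav_gain_of_swap:
  assumes "finite C" "finite (dom A)" "party_partition C A P"
    and Q: "Q \<in> P" and R: "R \<in> P" and "Q \<noteq> R"
    and QW: "Q \<subseteq> W" and a: "a \<in> Q" and b: "b \<in> R" "b \<notin> W" and "finite W"
  shows "thiele_score pav_score A (insert b (W - {a})) - thiele_score pav_score A W =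
    real (supporters A R) / real (card (R \<inter> W) + 1) - real (supporters A Q) / real (card Q)"
proof -
  define W' where "W' = insert b (W - {a})"
  have part: "partition_on C P" and ran: "ran A \<subseteq> P"
    using assms(3) by (auto simp: party_partition_def)
  have disj: "B \<inter> B' = {}" if "B \<in> P" "B' \<in> P" "B \<noteq> B'" for B B'
    using disjointD[OF partition_onD2[OF part]] that by blast
  have "finite Q"
    using Q part assms(1) by (metis Sup_upper finite_subset partition_onD1)
  have Q_swap: "Q \<inter> W' = Q - {a}"
    using QW b disj[OF Q R \<open>Q \<noteq> R\<close>] unfolding W'_def by auto
  have R_swap: "R \<inter> W' = insert b (R \<inter> W)"
    using a b disj[OF Q R \<open>Q \<noteq> R\<close>] unfolding W'_def by auto
  have others: "B \<inter> W' = B \<inter> W" if "B \<in> P - {Q, R}" for B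
  proof -
    have "a \<notin> B" "b \<notin> B"
      using that Q R a b disj[of B Q] disj[of B R] by auto
    then show ?thesis unfolding W'_def by auto
  qed
  obtain q where q: "card Q = Suc q"
    using \<open>finite Q\<close> a by (cases "card Q") auto
  have "thiele_score pav_score A W' - thiele_score pav_score A W =
      (\<Sum>B\<in>{Q, R}. real (supporters A B) *
        (pav_score (card (B \<inter> W')) - pav_score (card (B \<inter> W))))"
    using Q R others
    by (intro thiele_score_diff_eq_sum_changed[OF assms(2) ran finite_elements[OF assms(1) part]]) auto
  also have "\<dots> = real (supporters A R) / real (card (R \<inter> W) + 1) - real (supporters A Q) / real (card Q)"
    using \<open>Q \<noteq> R\<close> QW a b \<open>finite W\<close> \<open>finite Q\<close> q Q_swap R_swap
    by (simp add: Int_absorb2 pav_score_Suc)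
  finally show ?thesis unfolding W'_def .
qed

lemma pav_party_proportional:
  assumes "finite C"
  shows "party_proportional C (thiele_winners C k pav_score)"
  unfolding party_proportional_def
proof (intro allI impI ballI)
  fix A P W Q R
  assume prof: "is_profile C A" and part: "party_partition C A P"
    and win: "W \<in> thiele_winners C k pav_score A" and Q: "Q \<in> P" and R: "R \<in> P"
    and less: "real (supporters A Q) / real (card Q) < real (supporters A R) / real (card R)"
    and "Q \<subseteq> W"
  show "R \<subseteq> W"
  proof (rule ccontr)
    assume "\<not> R \<subseteq> W"
    then obtain b where b: "b \<in> R" "b \<notin> W" by blast
    have "Q \<noteq> R" using less by auto
    have "Q \<noteq> {}" "R \<subseteq> C"
      using Q R part by (auto simp: party_partition_def partition_on_def)
    then obtain a where a: "a \<in> Q" by blast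
    have W: "W \<subseteq> C" "card W = k" "finite W"
      using win assms finite_subset by (auto simp: thiele_winners_def committees_def)
    define W' where "W' = insert b (W - {a})"
    have "a \<in> W" using a \<open>Q \<subseteq> W\<close> by blast
    then have "0 < card W"
      using W(3) card_gt_0_iff by blast
    then have "W' \<in> committees C k"
      using W b \<open>a \<in> W\<close> \<open>R \<subseteq> C\<close> unfolding W'_def committees_def
      by (auto simp: card_insert_if card_Diff_singleton)
    have "finite R"
      using \<open>R \<subseteq> C\<close> assms finite_subset by blast
    then have "card (insert b (R \<inter> W)) \<le> card R"
      using b by (intro card_mono) auto
    then have "card (R \<inter> W) + 1 \<le> card R"
      using b \<open>finite R\<close> by simp
    then have "real (supporters A R) / real (card R) \<le> real (supporters A R) / real (card (R \<inter> W) + 1)"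
      by (intro divide_left_mono) auto
    then have "thiele_score pav_score A W < thiele_score pav_score A W'"
      using pav_gain_of_swap[OF assms _ part Q R \<open>Q \<noteq> R\<close> \<open>Q \<subseteq> W\<close> a b W(3)] less prof
      unfolding W'_def is_profile_def by linarith
    with win \<open>W' \<in> committees C k\<close> show False
      unfolding thiele_winners_def by force
  qed
qed

locale proportionality_gadget =
  fixes C S P :: "'c set" and c :: 'c and n1 n2 :: nat
  assumes finite_C: "finite C" and S_subset: "S \<subseteq> C" and c_in_S: "c \<in> S"
    and P_subset: "P \<subseteq> S - {c}" and P_nonempty: "P \<noteq> {}"
    and n1_pos: "1 \<le> n1" and n2_pos: "1 \<le> n2"
begin

definition filler :: "'c set" where
  "filler = S - {c} - P"

definition n_filler :: nat where
  "n_filler = (n1 + n2 + 1) * card filler"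

text \<open>The filler party has n1 + n2 + 1 voters per candidate, more than any other party, so
  proportionality puts it into every winning committee.\<close>

definition gadget :: "'c profile" where
  "gadget i = (if i < n1 then Some P else if i < n1 + n2 then Some {c}
     else if i < n1 + n2 + n_filler then Some filler else None)"

definition parties :: "'c set set" where
  "parties = ({P, {c}, filler} \<union> (\<lambda>z. {z}) ` (C - S)) - {{}}"

lemma finite_S: "finite S"
  using finite_C S_subset finite_subset by blast

lemma S_eq: "S = insert c (P \<union> filler)"
  using c_in_S P_subset unfolding filler_def by auto

lemma parties_distinct: "P \<noteq> {c}" "P \<noteq> filler" "{c} \<noteq> filler"
  using P_subset P_nonempty unfolding filler_def by auto

lemma supporters_gadget:
  "supporters gadget P = n1" "supporters gadget {c} = n2" "supporters gadget filler = n_filler"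
  "z \<notin> S \<Longrightarrow> supporters gadget {z} = 0"
proof -
  have "{i \<in> dom gadget. gadget i = Some P} = {..<n1}"
    "{i \<in> dom gadget. gadget i = Some {c}} = {n1..<n1 + n2}"
    "{i \<in> dom gadget. gadget i = Some filler} = {n1 + n2..<n1 + n2 + n_filler}"
    using parties_distinct unfolding gadget_def by (auto simp: dom_def)
  then show "supporters gadget P = n1" "supporters gadget {c} = n2"
    "supporters gadget filler = n_filler"
    unfolding supporters_def by simp_all
  assume "z \<notin> S"
  then have "{z} \<noteq> P" "{z} \<noteq> {c}" "{z} \<noteq> filler"
    using P_subset c_in_S unfolding filler_def by auto
  then have "{i \<in> dom gadget. gadget i = Some {z}} = {}"
    unfolding gadget_def by auto
  then show "supporters gadget {z} = 0"
    unfolding supporters_def by (simp only: card.empty)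
qed

lemma dom_gadget: "dom gadget = {..<n1 + n2 + n_filler}"
  unfolding gadget_def by (auto simp: dom_def)

lemma ran_gadget: "ran gadget \<subseteq> {P, {c}, filler} - {{}}"
proof -
  have "filler \<noteq> {}" if "n_filler \<noteq> 0"
    using that unfolding n_filler_def by auto
  then show ?thesis
    using P_nonempty unfolding gadget_def ran_def by auto
qed

lemma gadget_is_profile: "is_profile C gadget"
proof -
  have "P \<union> {c} \<union> filler \<subseteq> C"
    using S_eq S_subset by auto
  then have "ran gadget \<subseteq> ballots C"
    using ran_gadget unfolding ballots_def by auto
  moreover have "dom gadget \<noteq> {}"
    using dom_gadget n1_pos by auto
  ultimately show ?thesis
    unfolding is_profile_def dom_gadget by simp
qed

lemma gadget_party_partition: "party_partition C gadget parties"
  unfolding party_partition_def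
proof
  have parts: "P \<subseteq> S" "{c} \<subseteq> S" "filler \<subseteq> S"
    "P \<inter> {c} = {}" "P \<inter> filler = {}" "{c} \<inter> filler = {}"
    using S_eq P_subset unfolding filler_def by auto
  have party_cases: "p \<in> {P, {c}, filler} \<or> (\<exists>z. z \<notin> S \<and> p = {z})" if "p \<in> parties" for p
    using that unfolding parties_def by blast
  show "partition_on C parties"
  proof (rule partition_onI)
    have "\<Union> parties = P \<union> {c} \<union> filler \<union> (C - S)"
      unfolding parties_def by blast
    then show "\<Union> parties = C"
      using S_eq S_subset by blast
    show "{} \<notin> parties"
      unfolding parties_def by blast
    show "disjnt p q" if "p \<in> parties" "q \<in> parties" "p \<noteq> q" for p q
      using party_cases[OF that(1)] party_cases[OF that(2)] that(3) parts
      unfolding disjnt_def by blast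
  qed
  show "ran gadget \<subseteq> parties"
    using ran_gadget unfolding parties_def by auto
qed

lemma thiele_score_gadget:
  "thiele_score s gadget W = real n1 * s (card (P \<inter> W)) + real n2 * s (card ({c} \<inter> W))
     + real n_filler * s (card (filler \<inter> W))"
proof -
  have "ran gadget \<subseteq> {P, {c}, filler}"
    using ran_gadget by auto
  from thiele_score_eq_sum_supporters[OF _ this] show ?thesis
    using dom_gadget parties_distinct supporters_gadget
    by simp
qed

lemma thiele_score_gadget_without_c:
  assumes "s 0 = 0"
  shows "thiele_score s gadget (S - {c}) = real n1 * s (card P) + real n_filler * s (card filler)"
proof -
  have "P \<inter> (S - {c}) = P" "filler \<inter> (S - {c}) = filler"
    using P_subset unfolding filler_def by auto
  then show ?thesis
    using assms by (simp add: thiele_score_gadget)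
qed

lemma thiele_score_gadget_without_P_member:
  assumes "e \<in> P"
  shows "thiele_score s gadget (S - {e}) =
    real n1 * s (card P - 1) + real n2 * s 1 + real n_filler * s (card filler)"
proof -
  have "P \<inter> (S - {e}) = P - {e}" "{c} \<inter> (S - {e}) = {c}" "filler \<inter> (S - {e}) = filler"
    using assms P_subset c_in_S unfolding filler_def by auto
  moreover have "finite P"
    using P_subset finite_S finite_subset by blast
  ultimately show ?thesis
    using assms by (simp add: thiele_score_gadget)
qed

lemma committee_without: "e \<in> S \<Longrightarrow> card S = k + 1 \<Longrightarrow> S - {e} \<in> committees C k"
  using S_subset finite_S unfolding committees_def by auto

lemma proportional_winner_shape:
  assumes pp: "party_proportional C f" and W: "W \<in> f gadget"
    and "W \<subseteq> C" and card_W: "card W + 1 = card S"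
  shows "\<exists>e \<in> insert c P. W = S - {e}"
proof -
  note elect = party_proportionalD[OF pp gadget_is_profile gadget_party_partition W]
  have P_party: "P \<in> parties" and c_party: "{c} \<in> parties"
    and filler_party: "filler \<noteq> {} \<Longrightarrow> filler \<in> parties"
    and outside_party: "z \<in> C - S \<Longrightarrow> {z} \<in> parties" for z
    using P_nonempty unfolding parties_def by auto
  have "finite P" "finite filler"
    using finite_S S_eq by (auto intro: finite_subset)
  then have ratio_P: "0 < real n1 / real (card P)"
    using n1_pos P_nonempty by (simp add: card_gt_0_iff)
  have ratio_filler: "real (supporters gadget filler) / real (card filler) = real (n1 + n2 + 1)"
    if "filler \<noteq> {}"
    using that \<open>finite filler\<close> unfolding supporters_gadget n_filler_def
    by (simp add: field_simps)
  have filler_elected: "filler \<subseteq> W" if "{c} \<subseteq> W"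
  proof (cases "filler = {}")
    case False
    show ?thesis
      using elect[OF c_party filler_party[OF False] _ that] ratio_filler[OF False]
      by (simp add: supporters_gadget)
  qed simp
  have "W \<subseteq> S"
  proof
    fix z assume "z \<in> W"
    show "z \<in> S"
    proof (rule ccontr)
      assume "z \<notin> S"
      then have z_party: "{z} \<in> parties" and "{z} \<subseteq> W"
        using outside_party \<open>W \<subseteq> C\<close> \<open>z \<in> W\<close> by auto
      have "P \<subseteq> W" "{c} \<subseteq> W"
        using elect[OF z_party P_party _ \<open>{z} \<subseteq> W\<close>] elect[OF z_party c_party _ \<open>{z} \<subseteq> W\<close>]
          ratio_P n2_pos \<open>z \<notin> S\<close> by (simp_all add: supporters_gadget)
      then have "insert z S \<subseteq> W"
        using filler_elected S_eq \<open>z \<in> W\<close> by auto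
      then have "card (insert z S) \<le> card W"
        using finite_C \<open>W \<subseteq> C\<close> by (meson card_mono finite_subset)
      then show False
        using \<open>z \<notin> S\<close> finite_S card_W by simp
    qed
  qed
  then have "card (S - W) = 1"
    using finite_S card_W by (simp add: card_Diff_subset finite_subset)
  then obtain e where e: "S - W = {e}"
    using card_1_singletonE by blast
  then have W_eq: "W = S - {e}" and "e \<in> S"
    using \<open>W \<subseteq> S\<close> by auto
  have "e \<notin> filler"
  proof
    assume "e \<in> filler"
    then have "{c} \<subseteq> W"
      using W_eq c_in_S unfolding filler_def by auto
    with filler_elected \<open>e \<in> filler\<close> W_eq show False by auto
  qed
  then have "e \<in> insert c P"
    using \<open>e \<in> S\<close> S_eq by blast
  with W_eq show ?thesis by blast
qed

lemma proportional_thiele_gadget_bounds: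
  assumes pp: "party_proportional C (thiele_winners C k s)" and "s 0 = 0"
    and card_S: "card S = k + 1"
  shows "n2 * card P < n1 \<Longrightarrow>
      real n1 * s (card P - 1) + real n2 * s 1 < real n1 * s (card P)"
    and "n1 < n2 * card P \<Longrightarrow>
      real n1 * s (card P) < real n1 * s (card P - 1) + real n2 * s 1"
proof -
  let ?winners = "thiele_winners C k s gadget"
  have "k \<le> card C"
    using card_mono[OF finite_C S_subset] card_S by linarith
  then have nonempty: "?winners \<noteq> {}"
    using thiele_winners_nonempty finite_C by blast
  have shape: "\<exists>e \<in> insert c P. W = S - {e}" if W: "W \<in> ?winners" for W
  proof -
    have "W \<subseteq> C" "card W + 1 = card S"
      using W card_S by (auto simp: thiele_winners_def committees_def)
    then show ?thesis
      using proportional_winner_shape[OF pp W] by blast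
  qed
  note elect = party_proportionalD[OF pp gadget_is_profile gadget_party_partition]
  have P_party: "P \<in> parties" and c_party: "{c} \<in> parties"
    using P_nonempty unfolding parties_def by auto
  have "finite P"
    using finite_S P_subset finite_subset by blast
  then have card_P: "0 < card P"
    using P_nonempty by (simp add: card_gt_0_iff)
  obtain a where "a \<in> P"
    using P_nonempty by blast
  have "a \<in> S" "S - {a} \<noteq> S - {c}"
    using \<open>a \<in> P\<close> P_subset c_in_S by auto
  show "real n1 * s (card P - 1) + real n2 * s 1 < real n1 * s (card P)"
    if "n2 * card P < n1"
  proof -
    have less: "real n2 < real n1 / real (card P)"
      using that card_P by (simp add: field_simps flip: of_nat_mult)
    have only: "W = S - {c}" if W: "W \<in> ?winners" for W
    proof (rule ccontr)
      assume "W \<noteq> S - {c}"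
      then obtain e where "e \<in> P" "W = S - {e}"
        using shape[OF W] by blast
      then have "{c} \<subseteq> W"
        using c_in_S P_subset by auto
      then have "P \<subseteq> W"
        using elect[OF W c_party P_party] less by (simp add: supporters_gadget)
      with \<open>e \<in> P\<close> \<open>W = S - {e}\<close> show False by auto
    qed
    have "S - {c} \<in> ?winners"
      using nonempty only by blast
    moreover have "S - {a} \<notin> ?winners"
      using only \<open>S - {a} \<noteq> S - {c}\<close> by blast
    ultimately have "thiele_score s gadget (S - {a}) < thiele_score s gadget (S - {c})"
      using thiele_winners_strict committee_without[OF \<open>a \<in> S\<close> card_S] by blast
    then show ?thesis
      using \<open>a \<in> P\<close> assms(2)
      by (simp add: thiele_score_gadget_without_c thiele_score_gadget_without_P_member)
  qed
  show "real n1 * s (card P) < real n1 * s (card P - 1) + real n2 * s 1"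
    if "n1 < n2 * card P"
  proof -
    have less: "real n1 / real (card P) < real n2"
      using that card_P by (simp add: field_simps flip: of_nat_mult)
    have "P \<subseteq> S - {c}"
      using P_subset by blast
    have "S - {c} \<notin> ?winners"
    proof
      assume "S - {c} \<in> ?winners"
      from elect[OF this P_party c_party _ \<open>P \<subseteq> S - {c}\<close>] less
      have "{c} \<subseteq> S - {c}"
        by (simp add: supporters_gadget)
      then show False by blast
    qed
    moreover obtain W where "W \<in> ?winners"
      using nonempty by blast
    ultimately obtain e where "e \<in> P" "S - {e} \<in> ?winners"
      using shape by fastforce
    then have "thiele_score s gadget (S - {c}) < thiele_score s gadget (S - {e})"
      using thiele_winners_strict committee_without[OF c_in_S card_S] \<open>S - {c} \<notin> ?winners\<close>
      by blast
    then show ?thesis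
      using \<open>e \<in> P\<close> assms(2)
      by (simp add: thiele_score_gadget_without_c thiele_score_gadget_without_P_member)
  qed
qed

end

lemma proportional_thiele_score_bounds:
  assumes "finite C" "k + 1 \<le> card C" "x < k" "1 \<le> n1" "1 \<le> n2"
    and pp: "party_proportional C (thiele_winners C k s)" and "s 0 = 0"
  shows "n2 * (x + 1) < n1 \<Longrightarrow> real n1 * s x + real n2 * s 1 < real n1 * s (x + 1)"
    and "n1 < n2 * (x + 1) \<Longrightarrow> real n1 * s (x + 1) < real n1 * s x + real n2 * s 1"
proof -
  obtain S where S: "S \<subseteq> C" "card S = k + 1"
    using obtain_subset_with_card_n[OF assms(2)] by blast
  then have "finite S" "S \<noteq> {}"
    using assms(1) finite_subset by fastforce+
  then obtain c where "c \<in> S" by blast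
  then have "x + 1 \<le> card (S - {c})"
    using S(2) \<open>finite S\<close> assms(3) by simp
  then obtain P where P: "P \<subseteq> S - {c}" "card P = x + 1"
    by (rule obtain_subset_with_card_n)
  then have "P \<noteq> {}" by auto
  interpret proportionality_gadget C S P c n1 n2
    using assms(1,4,5) S(1) \<open>c \<in> S\<close> P(1) \<open>P \<noteq> {}\<close> by unfold_locales
  show "n2 * (x + 1) < n1 \<Longrightarrow> real n1 * s x + real n2 * s 1 < real n1 * s (x + 1)"
    "n1 < n2 * (x + 1) \<Longrightarrow> real n1 * s (x + 1) < real n1 * s x + real n2 * s 1"
    using proportional_thiele_gadget_bounds[OF pp assms(7) S(2)] P(2) by simp_all
qed

lemma nonpos_if_multiples_bounded:
  fixes d e :: real
  assumes "\<And>n::nat. 1 \<le> n \<Longrightarrow> real n * e < d"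
  shows "e \<le> 0"
proof (rule ccontr)
  assume "\<not> e \<le> 0"
  then obtain n :: nat where "d < real n * e"
    using ex_less_of_nat_mult[of e d] by auto
  moreover have "real n * e \<le> real (n + 1) * e"
    using \<open>\<not> e \<le> 0\<close> by (intro mult_right_mono) auto
  moreover have "real (n + 1) * e < d"
    using assms[of "n + 1"] by simp
  ultimately show False by linarith
qed

lemma increment_eq_of_bounds:
  fixes a b u :: real and q :: nat
  assumes "2 \<le> q"
    and above: "\<And>n1 n2. 1 \<le> n1 \<Longrightarrow> 1 \<le> n2 \<Longrightarrow> n2 * q < n1 \<Longrightarrow>
      real n1 * a + real n2 * u < real n1 * b"
    and below: "\<And>n1 n2. 1 \<le> n1 \<Longrightarrow> 1 \<le> n2 \<Longrightarrow> n1 < n2 * q \<Longrightarrow>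
      real n1 * b < real n1 * a + real n2 * u"
  shows "b - a = u / real q"
proof -
  \<comment> \<open>Take n1 = q n + 1, resp. n1 = q n - 1, and n2 = n.\<close>
  have "real n * (u - real q * (b - a)) < b - a" if "1 \<le> n" for n :: nat
  proof -
    have "real (n * q + 1) * a + real n * u < real (n * q + 1) * b"
      using above[of "n * q + 1" n] that by simp
    then show ?thesis by (simp add: algebra_simps)
  qed
  moreover have "real n * (real q * (b - a) - u) < b - a" if "1 \<le> n" for n :: nat
  proof -
    have "2 \<le> n * q"
      using assms(1) that by (metis mult_1 mult_le_mono)
    then have less: "real (n * q - 1) * b < real (n * q - 1) * a + real n * u"
      using below[of "n * q - 1" n] that by simp
    have "real (n * q - 1) = real n * real q - 1"
      using \<open>2 \<le> n * q\<close> by (simp add: of_nat_diff flip: One_nat_def)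
    from less[unfolded this] show ?thesis
      by (simp add: algebra_simps)
  qed
  ultimately have "u - real q * (b - a) \<le> 0" "real q * (b - a) - u \<le> 0"
    using nonpos_if_multiples_bounded by blast+
  then show ?thesis
    using assms(1) by (simp add: field_simps)
qed

lemma scaled_pav_score_if_increments:
  assumes "s 0 = 0" and "\<And>x. 1 \<le> x \<Longrightarrow> x < k \<Longrightarrow> s (x + 1) - s x = s 1 / real (x + 1)"
    and "x \<le> k"
  shows "s x = s 1 * pav_score x"
  using assms(3)
proof (induction x)
  case 0
  then show ?case
    using assms(1) by (simp add: pav_score_def)
next
  case (Suc x)
  have "s (Suc x) - s x = s 1 / real (Suc x)"
  proof (cases "x = 0")
    case True
    then show ?thesis
      using assms(1) by simp
  next
    case False
    then show ?thesis
      using assms(2)[of x] Suc.prems by simp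
  qed
  then show ?case
    using Suc by (simp add: pav_score_Suc algebra_simps)
qed

lemma proportional_thiele_score_eq_scaled_pav:
  assumes "finite C" "k + 1 \<le> card C" "1 \<le> k"
    and pp: "party_proportional C (thiele_winners C k s)" and "s 0 = 0"
  shows "0 < s 1" and "x \<le> k \<Longrightarrow> s x = s 1 * pav_score x"
proof -
  note bounds = proportional_thiele_score_bounds[OF assms(1,2) _ _ _ pp assms(5)]
  show "0 < s 1"
    using bounds(1)[of 0 2 1] assms(3,5) by simp
  have "s (x + 1) - s x = s 1 / real (x + 1)" if "1 \<le> x" "x < k" for x
  proof (rule increment_eq_of_bounds)
    show "2 \<le> x + 1"
      using that(1) by simp
    show "real n1 * s x + real n2 * s 1 < real n1 * s (x + 1)"
      if "1 \<le> n1" "1 \<le> n2" "n2 * (x + 1) < n1" for n1 n2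
      using bounds(1)[OF \<open>x < k\<close> that] .
    show "real n1 * s (x + 1) < real n1 * s x + real n2 * s 1"
      if "1 \<le> n1" "1 \<le> n2" "n1 < n2 * (x + 1)" for n1 n2
      using bounds(2)[OF \<open>x < k\<close> that] .
  qed
  then show "x \<le> k \<Longrightarrow> s x = s 1 * pav_score x"
    using scaled_pav_score_if_increments assms(5) by blast
qed

theorem proposition2:
  fixes C :: "'c set" and k :: nat and f :: "'c profile \<Rightarrow> 'c set set"
  assumes "finite C" and "2 \<le> card C" and "1 \<le> k" and "k \<le> card C - 1"
    and "thiele_rule C k f"
  shows "party_proportional C f \<longleftrightarrow> (\<forall>A. is_profile C A \<longrightarrow> f A = pav C k A)"
proof -
  obtain s where "s 0 = 0" and f: "\<And>A. is_profile C A \<Longrightarrow> f A = thiele_winners C k s A"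
    using assms(5) unfolding thiele_rule_def by blast
  have "k + 1 \<le> card C"
    using assms(2,4) by linarith
  have "party_proportional C f \<longleftrightarrow> party_proportional C (thiele_winners C k s)"
    using f by (rule party_proportional_cong)
  also have "\<dots> \<longleftrightarrow> (\<forall>A. is_profile C A \<longrightarrow> thiele_winners C k s A = pav C k A)"
  proof
    assume pp: "party_proportional C (thiele_winners C k s)"
    note scaled = proportional_thiele_score_eq_scaled_pav[OF assms(1) \<open>k + 1 \<le> card C\<close> assms(3) pp \<open>s 0 = 0\<close>]
    have "thiele_winners C k s A = thiele_winners C k pav_score A" for A
      by (rule thiele_winners_scaled[OF assms(1) scaled(1) scaled(2)])
    then show "\<forall>A. is_profile C A \<longrightarrow> thiele_winners C k s A = pav C k A"
      unfolding pav_def by blast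
  next
    assume "\<forall>A. is_profile C A \<longrightarrow> thiele_winners C k s A = pav C k A"
    then have "party_proportional C (thiele_winners C k s) \<longleftrightarrow>
        party_proportional C (thiele_winners C k pav_score)"
      unfolding pav_def by (intro party_proportional_cong) blast
    then show "party_proportional C (thiele_winners C k s)"
      using pav_party_proportional[OF assms(1)] by blast
  qed
  also have "\<dots> \<longleftrightarrow> (\<forall>A. is_profile C A \<longrightarrow> f A = pav C k A)"
    using f by auto
  finally show ?thesis .
qed

end
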